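(* Let $G$ be a group of order $N$, let $d\geqslant 2$ be an integer, let $x\in G\setminus\{1\}$ and let $1\leqslant i\leqslant d-1$. The number of ordered pairs $(e,f)$ of $d$-edges of $\Gamma_x$ with $|e\cap f|=i$ is at most $2^{2d}\binom{d}{i}^2 i!\,N^{2d-i-2}$.
   Context: For a group $G$, an integer $d\geqslant 2$ and $x\in G\setminus\{1\}$, $\Gamma_x$ is the hypergraph with vertex set $G\setminus\{1\}$ whose edges are the subsets $E\subseteq G\setminus\{1\}$ for which there exist an integer $\ell$ with $|E|\leqslant\ell\leqslant d$, elements $h_1,\ldots,h_\ell\in E$ (not necessarily distinct) and signs $a_1,\ldots,a_\ell\in\{-1,1\}$ such that every element of $E$ appears at least once among $h_1,\ldots,h_\ell$ and $h_1^{a_1}\cdots h_\ell^{a_\ell}=x$. An edge $E$ with $|E|=k$ is called a $k$-edge. *)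

theory Defs
  imports "HOL-Algebra.Group"
begin

text \<open>Evaluation of a signed word h_1^{a_1} ... h_l^{a_l}: a list of pairs (h, s),
  where s = True means exponent +1 and s = False means exponent -1.\<close>
fun word_eval :: "('a, 'b) monoid_scheme \<Rightarrow> ('a \<times> bool) list \<Rightarrow> 'a" where
  "word_eval G [] = \<one>\<^bsub>G\<^esub>"
| "word_eval G ((h, s) # ws) =
     (if s then h else inv\<^bsub>G\<^esub> h) \<otimes>\<^bsub>G\<^esub> word_eval G ws"

definition is_edge :: "('a, 'b) monoid_scheme \<Rightarrow> nat \<Rightarrow> 'a \<Rightarrow> 'a set \<Rightarrow> bool" where
  "is_edge G d x E \<longleftrightarrow>
     E \<subseteq> carrier G - {\<one>\<^bsub>G\<^esub>} \<and>
     (\<exists>ws. card E \<le> length ws \<and> length ws \<le> d \<and>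
           fst ` set ws = E \<and> word_eval G ws = x)"

end

theory Submission
  imports Defs "HOL-Library.FuncSet"
begin

text \<open>A d-edge of \<open>\<Gamma>\<^sub>x\<close> is the letter set of a word of length d with distinct letters
  and value x. Given the first word, a second one sharing i letters with it is fixed by its
  \<open>2\<^sup>d\<close> signs, the positions and values of the shared letters (at most
  \<open>(d choose i)\<^sup>2 i!\<close> choices) and all but one of its d - i other letters; the last letter
  is forced by the value x. The case i = 0 bounds the number of first words by
  \<open>2\<^sup>d N\<^bsup>d-1\<^esup>\<close>.\<close>

definition distinct_words :: "('a, 'b) monoid_scheme \<Rightarrow> nat \<Rightarrow> 'a \<Rightarrow> ('a \<times> bool) list set" where
  "distinct_words G d x = {ws. length ws = d \<and> distinct (map fst ws) \<and> fst ` set ws \<subseteq> carrier G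
                              \<and> word_eval G ws = x}"

lemma (in group) word_eval_closed:
  "fst ` set ws \<subseteq> carrier G \<Longrightarrow> word_eval G ws \<in> carrier G"
  by (induction ws) auto

lemma (in group) word_eval_append:
  "fst ` set u \<subseteq> carrier G \<Longrightarrow> fst ` set v \<subseteq> carrier G \<Longrightarrow>
    word_eval G (u @ v) = word_eval G u \<otimes> word_eval G v"
  by (induction u) (auto simp: m_assoc word_eval_closed)

lemma (in group) word_eval_update_cancel:
  assumes ws: "fst ` set ws \<subseteq> carrier G" and p: "p < length ws"
    and h: "h \<in> carrier G" "h' \<in> carrier G"
    and eq: "word_eval G (ws[p := (h, s)]) = word_eval G (ws[p := (h', s)])"
  shows "h = h'"
proof -
  define u where "u = take p ws"
  define v where "v = drop (Suc p) ws"
  have u: "fst ` set u \<subseteq> carrier G" and v: "fst ` set v \<subseteq> carrier G"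
    using ws set_take_subset set_drop_subset unfolding u_def v_def by fast+
  have "word_eval G (ws[p := (k, s)]) =
        word_eval G u \<otimes> ((if s then k else inv k) \<otimes> word_eval G v)" if "k \<in> carrier G" for k
    using p that u v by (simp add: upd_conv_take_nth_drop word_eval_append u_def v_def)
  then have "(if s then h else inv h) = (if s then h' else inv h')"
    using eq h u v by (simp add: word_eval_closed)
  then show ?thesis
    using h by (auto split: if_splits dest: inv_inj[THEN inj_onD, rotated])
qed

lemma (in group) word_eq_if_agree_except_one:
  assumes w1: "fst ` set w1 \<subseteq> carrier G" and w2: "fst ` set w2 \<subseteq> carrier G"
    and len: "length w1 = length w2" and signs: "map snd w1 = map snd w2"
    and p: "p < length w1"
    and agree: "\<forall>j<length w1. j \<noteq> p \<longrightarrow> fst (w1 ! j) = fst (w2 ! j)"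
    and eval: "word_eval G w1 = word_eval G w2"
  shows "w1 = w2"
proof -
  obtain h1 s where p1: "w1 ! p = (h1, s)" by fastforce
  obtain h2 where p2: "w2 ! p = (h2, s)"
    using signs p len p1 by (metis nth_map prod.collapse snd_conv)
  have h: "h1 \<in> carrier G" "h2 \<in> carrier G"
    using w1 w2 p len p1 p2 by (metis fst_conv image_subset_iff nth_mem)+
  have snd_eq: "snd (w1 ! j) = snd (w2 ! j)" if "j < length w1" for j
    using signs that len by (metis nth_map)
  have w2_upd: "w2 = w1[p := (h2, s)]"
  proof (rule nth_equalityI)
    fix j assume "j < length w2"
    then show "w2 ! j = w1[p := (h2, s)] ! j"
      using agree snd_eq len p2 by (cases "j = p") (auto simp: prod_eq_iff)
  qed (use len in simp)
  have w1_upd: "w1 = w1[p := (h1, s)]" using p1 by (metis list_update_id)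
  then have "h1 = h2"
    using word_eval_update_cancel[OF w1 p h] eval w2_upd by metis
  then show ?thesis using w1_upd w2_upd by metis
qed

definition letter_positions :: "'a set \<Rightarrow> ('a \<times> 'b) list \<Rightarrow> nat set" where
  "letter_positions E ws = {j. j < length ws \<and> fst (ws ! j) \<in> E}"

lemma card_letter_positions:
  assumes "distinct (map fst ws)"
  shows "card (letter_positions E ws) = card (E \<inter> fst ` set ws)"
proof -
  have "(!) (map fst ws) ` letter_positions E ws = E \<inter> set (map fst ws)"
    by (force simp: letter_positions_def in_set_conv_nth)
  moreover have "inj_on ((!) (map fst ws)) (letter_positions E ws)"
    using assms by (intro inj_on_nth) (auto simp: letter_positions_def)
  ultimately show ?thesis by (metis card_image set_map)
qed

lemma falling_factorial_eq_choose_fact: "prod ((-) n) {0..<k} = (n choose k) * fact k" for n k :: nat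
proof (induction k)
  case (Suc k)
  have "prod ((-) n) {0..<Suc k} = (n choose k) * (n - k) * fact k"
    using Suc by simp
  also have "(n choose k) * (n - k) = (n choose Suc k) * Suc k"
    by (metis binomial_absorb_comp binomial_absorption mult.commute)
  also have "(n choose Suc k) * Suc k * fact k = (n choose Suc k) * fact (Suc k)"
    by (simp add: algebra_simps)
  finally show ?case .
qed simp

lemma card_inj_on_PiE:
  "finite A \<Longrightarrow> finite B \<Longrightarrow>
    card {g \<in> A \<rightarrow>\<^sub>E B. inj_on g A} = (card B choose card A) * fact (card A)"
  using card_inj_on_subset_funcset[of A B A] by (simp add: falling_factorial_eq_choose_fact)

definition spare_position :: "nat \<Rightarrow> nat set \<Rightarrow> nat" where
  "spare_position d T = Max ({..<d} - T)"

definition free_positions :: "nat \<Rightarrow> nat set \<Rightarrow> nat set" where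
  "free_positions d T = {..<d} - T - {spare_position d T}"

lemma spare_position_mem:
  assumes "T \<subseteq> {..<d}" "card T < d"
  shows "spare_position d T \<in> {..<d} - T"
proof -
  have "\<not> {..<d} \<subseteq> T"
    using assms card_mono[OF finite_subset[OF assms(1)], of "{..<d}"] by auto
  then show ?thesis unfolding spare_position_def by (intro Max_in) auto
qed

lemma card_free_positions:
  assumes "T \<subseteq> {..<d}" "card T < d"
  shows "card (free_positions d T) = d - card T - 1"
proof -
  have "card ({..<d} - T) = d - card T"
    using assms(1) by (simp add: card_Diff_subset finite_subset)
  then show ?thesis
    using spare_position_mem[OF assms] by (simp add: free_positions_def)
qed

text \<open>Codes of the words of length d meeting E in i letters: the signs, the set of positions of
  the letters from E together with these (distinct) letters, and the letters at the free
  positions. The letter at the spare position is recovered from the value of the word.\<close>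
definition word_codes ::
    "nat \<Rightarrow> nat \<Rightarrow> 'a set \<Rightarrow> 'a set \<Rightarrow> (bool list \<times> nat set \<times> (nat \<Rightarrow> 'a) \<times> (nat \<Rightarrow> 'a)) set" where
  "word_codes d i E A = {ss. length ss = d} \<times>
     (SIGMA T:{T. T \<subseteq> {..<d} \<and> card T = i}. {g \<in> T \<rightarrow>\<^sub>E E. inj_on g T} \<times> (free_positions d T \<rightarrow>\<^sub>E A))"

lemma finite_word_codes: "finite E \<Longrightarrow> finite A \<Longrightarrow> finite (word_codes d i E A)"
  unfolding word_codes_def free_positions_def
  by (intro finite_cartesian_product finite_SigmaI finite_PiE)
     (auto simp: finite_lists_length_eq[of UNIV, simplified] finite_PiE finite_subset[of _ "{..<d}"])

lemma card_word_codes: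
  assumes "finite E" "finite A" "i < d"
  shows "card (word_codes d i E A) =
    2 ^ d * (d choose i) * ((card E choose i) * fact i) * card A ^ (d - i - 1)"
proof -
  let ?Ts = "{T. T \<subseteq> {..<d} \<and> card T = i}"
  let ?F = "\<lambda>T. {g \<in> T \<rightarrow>\<^sub>E E. inj_on g T} \<times> (free_positions d T \<rightarrow>\<^sub>E A)"
  have signs: "card {ss :: bool list. length ss = d} = 2 ^ d"
    using card_lists_length_eq[of "UNIV :: bool set" d] by simp
  have card_F: "card (?F T) = (card E choose i) * fact i * card A ^ (d - i - 1)" if "T \<in> ?Ts" for T
  proof -
    have T: "T \<subseteq> {..<d}" "card T = i" "finite T" using that finite_subset by auto
    then have "card (free_positions d T) = d - i - 1" using assms(3) card_free_positions by simp
    then show ?thesis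
      using T assms(1) by (simp add: card_cartesian_product card_inj_on_PiE card_funcsetE free_positions_def)
  qed
  have fin_F: "finite (?F T)" if "T \<in> ?Ts" for T
    using that assms(1,2)
    by (intro finite_cartesian_product finite_PiE) (auto simp: free_positions_def finite_PiE finite_subset)
  have "card (Sigma ?Ts ?F) = card ?Ts * ((card E choose i) * fact i * card A ^ (d - i - 1))"
    using card_F fin_F by (simp add: card_SigmaI)
  also have "card ?Ts = d choose i" by (simp add: n_subsets)
  finally show ?thesis
    unfolding word_codes_def by (simp add: card_cartesian_product signs)
qed

lemma card_distinct_words_meeting_le:
  assumes G: "group G" and fin: "finite (carrier G)" "finite E" and i: "i < d"
  shows "card {w \<in> distinct_words G d x. card (E \<inter> fst ` set w) = i}
         \<le> 2 ^ d * (d choose i) * ((card E choose i) * fact i) * card (carrier G) ^ (d - i - 1)"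
proof -
  define S where "S = {w \<in> distinct_words G d x. card (E \<inter> fst ` set w) = i}"
  define code where "code w =
    (map snd w, letter_positions E w, restrict (\<lambda>j. fst (w ! j)) (letter_positions E w),
     restrict (\<lambda>j. fst (w ! j)) (free_positions d (letter_positions E w)))"
    for w :: "('a \<times> bool) list"
  have S: "length w = d" "distinct (map fst w)" "fst ` set w \<subseteq> carrier G" "word_eval G w = x"
      "letter_positions E w \<subseteq> {..<d}" "card (letter_positions E w) = i" if "w \<in> S" for w
    using that card_letter_positions[of w E]
    by (auto simp: S_def distinct_words_def letter_positions_def)
  have "code ` S \<subseteq> word_codes d i E (carrier G)"
  proof
    fix c assume "c \<in> code ` S"
    then obtain w where w: "w \<in> S" and c: "c = code w" by blast
    have "inj_on (\<lambda>j. fst (w ! j)) (letter_positions E w)"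
      using S(2)[OF w] by (auto simp: inj_on_def letter_positions_def distinct_conv_nth)
    moreover have "fst (w ! j) \<in> carrier G" if "j < d" for j
      using S(1,3)[OF w] that by (auto intro: nth_mem)
    ultimately show "c \<in> word_codes d i E (carrier G)"
      using S[OF w] by (auto simp: c code_def word_codes_def letter_positions_def free_positions_def)
  qed
  moreover have "inj_on code S"
  proof
    fix w1 w2 assume w1: "w1 \<in> S" and w2: "w2 \<in> S" and "code w1 = code w2"
    then have signs: "map snd w1 = map snd w2"
      and on_T: "restrict (\<lambda>j. fst (w1 ! j)) (letter_positions E w1) =
                 restrict (\<lambda>j. fst (w2 ! j)) (letter_positions E w1)"
      and on_free: "restrict (\<lambda>j. fst (w1 ! j)) (free_positions d (letter_positions E w1)) =
                    restrict (\<lambda>j. fst (w2 ! j)) (free_positions d (letter_positions E w1))"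
      by (auto simp: code_def)
    define p where "p = spare_position d (letter_positions E w1)"
    have p: "p < d" using spare_position_mem S(5,6)[OF w1] i by (simp add: p_def)
    have "fst (w1 ! j) = fst (w2 ! j)" if "j < length w1" "j \<noteq> p" for j
    proof (cases "j \<in> letter_positions E w1")
      case True
      then show ?thesis using fun_cong[OF on_T, of j] by simp
    next
      case False
      then have "j \<in> free_positions d (letter_positions E w1)"
        using that S(1)[OF w1] by (simp add: free_positions_def p_def)
      then show ?thesis using fun_cong[OF on_free, of j] by simp
    qed
    then show "w1 = w2"
      using group.word_eq_if_agree_except_one[OF G] S[OF w1] S[OF w2] signs p by simp
  qed
  ultimately have "card S \<le> card (word_codes d i E (carrier G))"
    using finite_word_codes[OF fin(2,1)] by (intro card_inj_on_le)
  then show ?thesis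
    using card_word_codes[OF fin(2,1) i] by (simp add: S_def)
qed

lemma card_distinct_words_le:
  assumes "group G" "finite (carrier G)" "0 < d"
  shows "card (distinct_words G d x) \<le> 2 ^ d * card (carrier G) ^ (d - 1)"
  using card_distinct_words_meeting_le[OF assms(1,2), of "{}" 0 d x] assms(3) by simp

lemma finite_distinct_words: "finite (carrier G) \<Longrightarrow> finite (distinct_words G d x)"
  by (rule finite_subset[of _ "{ws. set ws \<subseteq> carrier G \<times> UNIV \<and> length ws = d}"])
     (force simp: distinct_words_def, simp add: finite_lists_length_eq)

lemma card_letters_distinct_words: "w \<in> distinct_words G d x \<Longrightarrow> card (fst ` set w) = d"
  by (metis (mono_tags, lifting) distinct_card distinct_words_def length_map list.set_map mem_Collect_eq)

lemma edge_of_card_eq_letters: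
  assumes "is_edge G d x e" "card e = d"
  shows "\<exists>w \<in> distinct_words G d x. fst ` set w = e"
proof -
  obtain w where w: "card e \<le> length w" "length w \<le> d" "fst ` set w = e" "word_eval G w = x"
    and e: "e \<subseteq> carrier G - {\<one>\<^bsub>G\<^esub>}"
    using assms(1) unfolding is_edge_def by blast
  have "card (set (map fst w)) = length (map fst w)" using w assms(2) by simp
  then have "distinct (map fst w)" by (rule card_distinct)
  then show ?thesis using w e assms(2) unfolding distinct_words_def by auto
qed

lemma card_edge_pairs_le_sum:
  assumes "finite (carrier G)"
  shows "card {(e, f). is_edge G d x e \<and> is_edge G d x f \<and> card e = d \<and> card f = d
                 \<and> card (e \<inter> f) = i}
         \<le> (\<Sum>a\<in>distinct_words G d x.
                card {b \<in> distinct_words G d x. card (fst ` set a \<inter> fst ` set b) = i})"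
proof -
  let ?W = "distinct_words G d x"
  let ?meet = "\<lambda>a. {b \<in> ?W. card (fst ` set a \<inter> fst ` set b) = i}"
  have fin: "finite (Sigma ?W ?meet)"
    using finite_distinct_words[OF assms] by auto
  have "{(e, f). is_edge G d x e \<and> is_edge G d x f \<and> card e = d \<and> card f = d \<and> card (e \<inter> f) = i}
        \<subseteq> (\<lambda>(a, b). (fst ` set a, fst ` set b)) ` Sigma ?W ?meet"
    by (force dest!: edge_of_card_eq_letters)
  then have "card {(e, f). is_edge G d x e \<and> is_edge G d x f \<and> card e = d \<and> card f = d
                 \<and> card (e \<inter> f) = i} \<le> card (Sigma ?W ?meet)"
    using fin by (meson card_image_le card_mono finite_imageI le_trans)
  also have "\<dots> = (\<Sum>a\<in>?W. card (?meet a))"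
    using fin by (simp add: card_SigmaI finite_distinct_words[OF assms])
  finally show ?thesis .
qed

theorem lemma15:
  fixes G :: "('a, 'b) monoid_scheme" and N d i :: nat and x :: 'a
  assumes "group G" and "finite (carrier G)" and "N = card (carrier G)"
    and "d \<ge> 2" and "x \<in> carrier G" and "x \<noteq> \<one>\<^bsub>G\<^esub>"
    and "1 \<le> i" and "i \<le> d - 1"
  shows "card {(e, f). is_edge G d x e \<and> is_edge G d x f \<and> card e = d \<and> card f = d
                 \<and> card (e \<inter> f) = i}
         \<le> 2 ^ (2 * d) * (d choose i) ^ 2 * fact i * N ^ (2 * d - i - 2)"
proof -
  let ?W = "distinct_words G d x"
  let ?M = "2 ^ d * (d choose i) * ((d choose i) * fact i) * N ^ (d - i - 1)"
  note card_edge_pairs_le_sum[OF assms(2), of d x i]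
  also have "(\<Sum>a\<in>?W. card {b \<in> ?W. card (fst ` set a \<inter> fst ` set b) = i}) \<le> card ?W * ?M"
  proof (rule sum_bounded_above[where 'a = nat, simplified])
    fix a assume "a \<in> ?W"
    then have "card (fst ` set a) = d" by (rule card_letters_distinct_words)
    then show "card {b \<in> ?W. card (fst ` set a \<inter> fst ` set b) = i} \<le> ?M"
      using card_distinct_words_meeting_le[OF assms(1,2), of "fst ` set a" i d x] assms(3,4,8)
      by simp
  qed
  also have "\<dots> \<le> (2 ^ d * N ^ (d - 1)) * ?M"
    using card_distinct_words_le[OF assms(1,2)] assms(3,4) by simp
  also have "\<dots> = 2 ^ (2 * d) * (d choose i) ^ 2 * fact i * N ^ (2 * d - i - 2)"
  proof -
    have "2 * d - i - 2 = (d - 1) + (d - i - 1)" using assms(4,8) by simp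
    then have "N ^ (2 * d - i - 2) = N ^ (d - 1) * N ^ (d - i - 1)" by (simp add: power_add)
    moreover have "(2::nat) ^ (2 * d) = 2 ^ d * 2 ^ d" by (simp add: mult_2 power_add)
    ultimately show ?thesis by (simp add: power2_eq_square algebra_simps)
  qed
  finally show ?thesis .
qed

end
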